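(* Let $\lambda=(\lambda_1,\ldots,\lambda_k)\in\mathcal P_k$, let $\mu$ be a partition maximal for $\lambda$, and let $P(\lambda)=(P_1,\ldots,P_r)$. If $i\in P_{h+1}$ for some $0\le h<r$, then $\mu_i=\lambda_i+\operatorname{sylv}(\lambda^{(h)})$.
   Context: A partition is a weakly decreasing sequence of nonnegative integers; $\mathcal P_k$ is the set of partitions with at most $k$ nonzero parts, written as sequences $(\lambda_1,\ldots,\lambda_k)$ (trailing zeros allowed), identified with Young diagrams; $|\lambda|=\sum\lambda_i$. For $\lambda\subseteq\mu$ in $\mathcal P_k$, ${\sf Tab}(\mu/\lambda)$ is the set of fillings of $\mu/\lambda$ with entries in $\{1,\ldots,k\}$ strictly increasing along rows (left to right) and columns (top to bottom), with every entry in row $i$ at most $i-1$. $\mu$ is maximal for $\lambda$ if ${\sf Tab}(\mu/\lambda)\ne\emptyset$ and ${\sf Tab}(\nu/\lambda)=\emptyset$ whenever $\nu\in\mathcal P_k$, $\lambda\subseteq\nu$, $|\nu|>|\mu|$. $P(\lambda)=(P_1,\ldots,P_r)$ is the ordered set partition of $\{1,\ldots,k\}$ into blocks of indices with equal parts: $i,j$ lie in the same block iff $\lambda_i=\lambda_j$, and $\lambda_i>\lambda_j$ whenever $i\in P_h$, $j\in P_l$ with $h<l$. Set $\lambda^{(0)}=\emptyset$, $\lambda^{(r)}=\lambda$, and for $1\le h\le r-1$, $\lambda^{(h)}=(\lambda_1-\lambda_i,\lambda_2-\lambda_i,\ldots,\lambda_{i-1}-\lambda_i)$ where $i=\min P_{h+1}$.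 For $n\ge1$ let $\delta^n=(n,n-1,\ldots,1)$ be the staircase, and for a partition $\nu$ let $\operatorname{sylv}(\nu)=\max\{m\ge 0:\delta^m\subseteq\nu\}$ (with $\delta^0=\emptyset$). *)

theory Defs
  imports Main
begin

text \<open>Partitions in P_k are lists of length k (trailing zeros allowed); the paper's
  1-indexed part lambda_i is the list entry at position i - 1.\<close>

definition is_partition :: "nat \<Rightarrow> nat list \<Rightarrow> bool" where
  "is_partition k lam \<longleftrightarrow> length lam = k \<and> sorted_wrt (\<ge>) lam"

definition part :: "nat list \<Rightarrow> nat \<Rightarrow> nat" where
  "part lam i = (if 1 \<le> i \<and> i \<le> length lam then lam ! (i - 1) else 0)"

definition size_part :: "nat list \<Rightarrow> nat" where
  "size_part lam = sum_list lam"

definition contained :: "nat list \<Rightarrow> nat list \<Rightarrow> bool" where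
  "contained lam mu \<longleftrightarrow> (\<forall>i. part lam i \<le> part mu i)"

definition skew_cells :: "nat list \<Rightarrow> nat list \<Rightarrow> (nat \<times> nat) set" where
  "skew_cells mu lam = {(i, j). 1 \<le> i \<and> part lam i < j \<and> j \<le> part mu i}"

definition Tab :: "nat \<Rightarrow> nat list \<Rightarrow> nat list \<Rightarrow> ((nat \<times> nat) \<Rightarrow> nat) set" where
  "Tab k mu lam = {T.
     (\<forall>c. c \<notin> skew_cells mu lam \<longrightarrow> T c = 0) \<and>
     (\<forall>c \<in> skew_cells mu lam. 1 \<le> T c \<and> T c \<le> k) \<and>
     (\<forall>i j j'. (i, j) \<in> skew_cells mu lam \<longrightarrow> (i, j') \<in> skew_cells mu lam \<longrightarrow> j < j'
        \<longrightarrow> T (i, j) < T (i, j')) \<and>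
     (\<forall>i i' j. (i, j) \<in> skew_cells mu lam \<longrightarrow> (i', j) \<in> skew_cells mu lam \<longrightarrow> i < i'
        \<longrightarrow> T (i, j) < T (i', j)) \<and>
     (\<forall>i j. (i, j) \<in> skew_cells mu lam \<longrightarrow> T (i, j) \<le> i - 1)}"

definition maximal_for :: "nat \<Rightarrow> nat list \<Rightarrow> nat list \<Rightarrow> bool" where
  "maximal_for k lam mu \<longleftrightarrow>
     is_partition k mu \<and> contained lam mu \<and> Tab k mu lam \<noteq> {} \<and>
     (\<forall>nu. is_partition k nu \<and> contained lam nu \<and> size_part nu > size_part mu
        \<longrightarrow> Tab k nu lam = {})"

text \<open>Ordered set partition P(lam) = (P_1, ..., P_r): the distinct values of lam in
  decreasing order are v_1 > ... > v_r and P_h = {i. lambda_i = v_h}.\<close>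
definition block_values :: "nat list \<Rightarrow> nat list" where
  "block_values lam = rev (sorted_list_of_set (set lam))"

definition num_blocks :: "nat list \<Rightarrow> nat" where
  "num_blocks lam = length (block_values lam)"

definition block :: "nat list \<Rightarrow> nat \<Rightarrow> nat set" where
  "block lam h = {i. 1 \<le> i \<and> i \<le> length lam \<and> h \<ge> 1 \<and> h \<le> num_blocks lam \<and>
                      part lam i = block_values lam ! (h - 1)}"

definition lam_trunc :: "nat list \<Rightarrow> nat \<Rightarrow> nat list" where
  "lam_trunc lam h =
     (if h = 0 then []
      else if h = num_blocks lam then lam
      else (let i = Min (block lam (h + 1)) in map (\<lambda>j. part lam j - part lam i) [1..<i]))"

definition staircase :: "nat \<Rightarrow> nat list" where
  "staircase n = rev [1..<n + 1]"

definition sylv :: "nat list \<Rightarrow> nat" where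
  "sylv nu = (GREATEST m. contained (staircase m) nu)"

end

(*
  A filling of mu/lam increases strictly along row i, starts at 1 or more and ends at i - 1 or
  less; columns add at least one per row.  Comparing the entry in row i with the entries above it
  in the same column shows that the staircase of size mu_i - lam_i fits into the shape
  (lam_1 - lam_i, ..., lam_(i-1) - lam_i), so mu_i <= lam_i + sylv of that shape.  Conversely the
  shape M with M_i = lam_i + sylv (lam_1 - lam_i, ..., lam_(i-1) - lam_i) is a partition and has a
  filling (put the largest entry allowed by the row condition in every cell).  Hence M contains
  every mu with Tab(mu/lam) nonempty and is itself such a shape, so it is the unique maximal one.
  For i in P_(h+1), the shape above row i agrees with lam^(h) up to trailing zeros.
*)

theory Submission
  imports Defs
begin

lemma strict_steps_add_le:
  fixes f :: "nat \<Rightarrow> nat"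
  assumes "a \<le> b" and incr: "\<And>j. a \<le> j \<Longrightarrow> j < b \<Longrightarrow> f j < f (Suc j)"
  shows "f a + (b - a) \<le> f b"
  using assms(1)
proof (induction b rule: dec_induct)
  case (step n)
  then show ?case using incr[of n] by (simp add: Suc_diff_le)
qed simp

lemma part_antimono:
  assumes "is_partition k lam" "1 \<le> i" "i \<le> i'"
  shows "part lam i' \<le> part lam i"
proof (cases "i' \<le> length lam")
  case True
  have "sorted_wrt (\<ge>) lam" using assms(1) unfolding is_partition_def by simp
  then have "lam ! (i' - 1) \<le> lam ! (i - 1)"
    using True assms by (cases "i = i'") (auto simp: sorted_wrt_iff_nth_less)
  then show ?thesis using True assms by (simp add: part_def)
qed (simp add: part_def)

lemma part_staircase: "part (staircase d) t = (if 1 \<le> t \<and> t \<le> d then d + 1 - t else 0)"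
proof (cases "1 \<le> t \<and> t \<le> d")
  case True
  have "rev [1..<d + 1] ! (t - 1) = [1..<d + 1] ! (d - t)"
    using True by (subst rev_nth) (auto simp del: upt_Suc)
  also have "\<dots> = d + 1 - t" using True by (subst nth_upt) auto
  finally show ?thesis using True by (simp add: part_def staircase_def del: upt_Suc)
qed (auto simp: part_def staircase_def)

lemma contained_staircase_iff:
  "contained (staircase d) nu \<longleftrightarrow> (\<forall>t. 1 \<le> t \<and> t \<le> d \<longrightarrow> d + 1 - t \<le> part nu t)"
  unfolding contained_def part_staircase by (metis le0)

lemma contained_staircase_le_length:
  assumes "contained (staircase d) nu"
  shows "d \<le> length nu"
proof (cases "d = 0")
  case False
  then have "d + 1 - d \<le> part nu d"
    using assms unfolding contained_staircase_iff by (auto dest: spec[of _ d])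
  then show ?thesis by (auto simp: part_def split: if_splits)
qed simp

lemma contained_staircase_sylv: "contained (staircase (sylv nu)) nu"
  unfolding sylv_def
  by (rule GreatestI_nat[where k = 0 and b = "length nu"])
     (auto simp: contained_staircase_iff intro: contained_staircase_le_length)

lemma le_sylv: "contained (staircase d) nu \<Longrightarrow> d \<le> sylv nu"
  unfolding sylv_def by (metis Greatest_le_nat contained_staircase_le_length)

lemma sylv_le_length: "sylv nu \<le> length nu"
  by (rule contained_staircase_le_length[OF contained_staircase_sylv])

text \<open>For i = min P_(h+1) with 0 < h this is the paper's lam^(h); since it is read through
  \<^const>\<open>part\<close>, trailing zeros are irrelevant, and by truncated subtraction every row
  i' with lambda_i' = lambda_i gives the same shape.\<close>

definition rows_above :: "nat list \<Rightarrow> nat \<Rightarrow> nat list" where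
  "rows_above lam i = map (\<lambda>j. part lam j - part lam i) [1..<i]"

lemma part_rows_above:
  assumes lam: "is_partition k lam" and "1 \<le> i"
  shows "part (rows_above lam i) t = (if 1 \<le> t then part lam t - part lam i else 0)"
proof -
  have "part (rows_above lam i) t = (if 1 \<le> t \<and> t < i then part lam t - part lam i else 0)"
    by (auto simp: rows_above_def part_def[of "map _ _"])
  moreover have "part lam t - part lam i = 0" if "i \<le> t"
    using part_antimono[OF lam \<open>1 \<le> i\<close> that] by simp
  ultimately show ?thesis by auto
qed

lemma contained_staircase_rows_above_iff:
  assumes "is_partition k lam" and "1 \<le> i"
  shows "contained (staircase d) (rows_above lam i) \<longleftrightarrow>
    (\<forall>t. 1 \<le> t \<and> t \<le> d \<longrightarrow> part lam i + (d + 1 - t) \<le> part lam t)"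
  unfolding contained_staircase_iff part_rows_above[OF assms] by auto

lemma sylv_rows_above_le: "sylv (rows_above lam i) \<le> i - 1"
  using sylv_le_length[of "rows_above lam i"] by (simp add: rows_above_def)

lemma part_add_sylv_rows_above_antimono:
  assumes lam: "is_partition k lam" and "1 \<le> i" "i \<le> i'"
  shows "part lam i' + sylv (rows_above lam i') \<le> part lam i + sylv (rows_above lam i)"
proof -
  define s' where "s' = sylv (rows_above lam i')"
  define d where "d = part lam i' + s' - part lam i"
  have "part lam i' \<le> part lam i" using part_antimono[OF assms] .
  have "\<forall>t. 1 \<le> t \<and> t \<le> s' \<longrightarrow> part lam i' + (s' + 1 - t) \<le> part lam t"
    using contained_staircase_sylv[of "rows_above lam i'"] assms
    unfolding s'_def by (simp add: contained_staircase_rows_above_iff[OF lam])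
  then have "\<forall>t. 1 \<le> t \<and> t \<le> d \<longrightarrow> part lam i + (d + 1 - t) \<le> part lam t"
    using \<open>part lam i' \<le> part lam i\<close> unfolding d_def by auto
  then have "contained (staircase d) (rows_above lam i)"
    using contained_staircase_rows_above_iff[OF lam \<open>1 \<le> i\<close>] by blast
  then have "d \<le> sylv (rows_above lam i)" by (rule le_sylv)
  then show ?thesis unfolding d_def s'_def by simp
qed

definition max_shape :: "nat list \<Rightarrow> nat list" where
  "max_shape lam = map (\<lambda>j. part lam j + sylv (rows_above lam j)) [1..<length lam + 1]"

lemma part_max_shape:
  "part (max_shape lam) a =
    (if 1 \<le> a \<and> a \<le> length lam then part lam a + sylv (rows_above lam a) else 0)"
  by (auto simp: max_shape_def part_def[of "map _ _"] simp del: upt_Suc)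

lemma is_partition_max_shape:
  assumes lam: "is_partition k lam"
  shows "is_partition k (max_shape lam)"
  unfolding is_partition_def sorted_wrt_iff_nth_less
proof (intro conjI allI impI)
  show "length (max_shape lam) = k" using lam by (simp add: max_shape_def is_partition_def)
  fix a b assume "a < b" "b < length (max_shape lam)"
  then show "max_shape lam ! b \<le> max_shape lam ! a"
    using part_add_sylv_rows_above_antimono[OF lam, of "Suc a" "Suc b"]
    by (simp add: max_shape_def nth_upt del: upt_Suc)
qed

lemma contained_max_shape: "contained lam (max_shape lam)"
  unfolding contained_def part_max_shape by (simp add: part_def)

text \<open>Every cell gets the largest entry the row conditions allow: the last cell of row a holds
  a - 1, and the entries decrease by one to the left.\<close>

definition max_filling :: "nat list \<Rightarrow> nat list \<Rightarrow> nat \<times> nat \<Rightarrow> nat" where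
  "max_filling mu lam =
     (\<lambda>(a, b). if (a, b) \<in> skew_cells mu lam then a + b - 1 - part mu a else 0)"

lemma max_filling_in_Tab:
  assumes mu: "is_partition k mu"
    and short_rows: "\<And>a. 1 \<le> a \<Longrightarrow> part mu a \<le> part lam a + (a - 1)"
  shows "max_filling mu lam \<in> Tab k mu lam"
proof -
  define T where "T = max_filling mu lam"
  have entry: "a + b = T (a, b) + 1 + part mu a \<and> 1 \<le> T (a, b) \<and> T (a, b) \<le> a - 1 \<and> a \<le> k"
    if "(a, b) \<in> skew_cells mu lam" for a b
  proof -
    have "1 \<le> a" "part lam a < b" "b \<le> part mu a" using that by (auto simp: skew_cells_def)
    moreover have "a \<le> k" using \<open>part lam a < b\<close> \<open>b \<le> part mu a\<close> mu
      by (auto simp: part_def is_partition_def split: if_splits)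
    moreover have "T (a, b) = a + b - 1 - part mu a" using that by (simp add: T_def max_filling_def)
    ultimately show ?thesis using short_rows[of a] by linarith
  qed
  show ?thesis
    unfolding T_def[symmetric] Tab_def mem_Collect_eq
  proof (intro conjI allI ballI impI)
    fix c assume "c \<notin> skew_cells mu lam"
    then show "T c = 0" unfolding T_def max_filling_def by (cases c) auto
  next
    fix c assume "c \<in> skew_cells mu lam"
    then show "1 \<le> T c" "T c \<le> k" using entry by (cases c; fastforce)+
  next
    fix a b b' assume cells: "(a, b) \<in> skew_cells mu lam" "(a, b') \<in> skew_cells mu lam" "b < b'"
    then show "T (a, b) < T (a, b')" using entry[OF cells(1)] entry[OF cells(2)] by linarith
  next
    fix a a' b assume cells: "(a, b) \<in> skew_cells mu lam" "(a', b) \<in> skew_cells mu lam" "a < a'"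
    have "1 \<le> a" using entry[OF cells(1)] by linarith
    then have "part mu a' \<le> part mu a" using part_antimono[OF mu] \<open>a < a'\<close> by simp
    then show "T (a, b) < T (a', b)" using entry[OF cells(1)] entry[OF cells(2)] \<open>a < a'\<close> by linarith
  next
    fix a b assume "(a, b) \<in> skew_cells mu lam"
    then show "T (a, b) \<le> a - 1" using entry by blast
  qed
qed

lemma Tab_max_shape_nonempty:
  assumes "is_partition k lam"
  shows "Tab k (max_shape lam) lam \<noteq> {}"
proof -
  have "part (max_shape lam) a \<le> part lam a + (a - 1)" for a
    using sylv_rows_above_le[of lam a] by (auto simp: part_max_shape)
  then have "max_filling (max_shape lam) lam \<in> Tab k (max_shape lam) lam"
    by (intro max_filling_in_Tab is_partition_max_shape assms)
  then show ?thesis by blast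
qed

lemma Tab_row_increase:
  assumes T: "T \<in> Tab k mu lam" and "(a, b') \<in> skew_cells mu lam" "part lam a < b" "b \<le> b'"
  shows "T (a, b) + (b' - b) \<le> T (a, b')"
proof (rule strict_steps_add_le[OF \<open>b \<le> b'\<close>])
  fix j assume "b \<le> j" "j < b'"
  then have "(a, j) \<in> skew_cells mu lam" "(a, Suc j) \<in> skew_cells mu lam"
    using assms(2-) by (auto simp: skew_cells_def)
  then show "T (a, j) < T (a, Suc j)" using T unfolding Tab_def by blast
qed

lemma Tab_column_increase:
  assumes lam: "is_partition k lam" and mu: "is_partition k mu" and T: "T \<in> Tab k mu lam"
    and cells: "(a, b) \<in> skew_cells mu lam" "(a', b) \<in> skew_cells mu lam" and "a \<le> a'"
  shows "T (a, b) + (a' - a) \<le> T (a', b)"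
proof (rule strict_steps_add_le[OF \<open>a \<le> a'\<close>])
  have between: "(j, b) \<in> skew_cells mu lam" if "a \<le> j" "j \<le> a'" for j
  proof -
    have "1 \<le> a" "part lam a < b" "b \<le> part mu a'" using cells by (auto simp: skew_cells_def)
    moreover have "part lam j \<le> part lam a" "part mu a' \<le> part mu j"
      using part_antimono[OF lam] part_antimono[OF mu] \<open>1 \<le> a\<close> that by auto
    ultimately show ?thesis using that by (auto simp: skew_cells_def)
  qed
  fix j assume "a \<le> j" "j < a'"
  then have "(j, b) \<in> skew_cells mu lam" "(Suc j, b) \<in> skew_cells mu lam" by (auto intro: between)
  then show "T (j, b) < T (Suc j, b)" using T unfolding Tab_def by blast
qed

lemma Tab_staircase_above_row:
  assumes lam: "is_partition k lam" and mu: "is_partition k mu" and T: "T \<in> Tab k mu lam"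
    and "1 \<le> i"
  shows "contained (staircase (part mu i - part lam i)) (rows_above lam i)"
  unfolding contained_staircase_rows_above_iff[OF lam \<open>1 \<le> i\<close>]
proof (intro allI impI)
  define d where "d = part mu i - part lam i"
  fix t assume "1 \<le> t \<and> t \<le> part mu i - part lam i"
  then have t: "1 \<le> t" "t \<le> d" unfolding d_def by auto
  have entry: "1 \<le> T (a, b) \<and> T (a, b) \<le> a - 1" if "(a, b) \<in> skew_cells mu lam" for a b
    using T that unfolding Tab_def by blast
  have row_cell: "(i, part lam i + c) \<in> skew_cells mu lam" if "1 \<le> c" "c \<le> d" for c
    using that \<open>1 \<le> i\<close> unfolding skew_cells_def d_def by auto
  have row_entry: "T (i, part lam i + c) + (d - c) \<le> i - 1" if "1 \<le> c" "c \<le> d" for c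
  proof -
    have last: "(i, part lam i + d) \<in> skew_cells mu lam" using row_cell that by simp
    have "T (i, part lam i + c) + (d - c) \<le> T (i, part lam i + d)"
      using Tab_row_increase[OF T last, of "part lam i + c"] that by simp
    also have "\<dots> \<le> i - 1" using entry[OF last] by simp
    finally show ?thesis .
  qed
  have "d \<le> i - 1" using row_entry[of 1] entry[OF row_cell[of 1]] t by fastforce
  then have "t < i" using t \<open>1 \<le> i\<close> by linarith
  define c where "c = d + 1 - t"
  have c: "1 \<le> c" "c \<le> d" "d - c = t - 1" using t unfolding c_def by auto
  show "part lam i + (part mu i - part lam i + 1 - t) \<le> part lam t"
  proof (rule ccontr)
    \<comment> \<open>Otherwise column part lam i + c has cells in all rows t..i, so its entry in row i is
      at least 1 + (i - t), whereas the row bound caps it at i - 1 - (d - c) = i - t.\<close>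
    assume "\<not> ?thesis"
    then have "part lam t < part lam i + c" unfolding c_def d_def by simp
    moreover have "part mu i \<le> part mu t" using part_antimono[OF mu, of t i] t \<open>t < i\<close> by simp
    ultimately have top: "(t, part lam i + c) \<in> skew_cells mu lam"
      using t c unfolding skew_cells_def d_def by auto
    have "T (t, part lam i + c) + (i - t) \<le> T (i, part lam i + c)"
      using Tab_column_increase[OF lam mu T top row_cell[OF c(1,2)]] \<open>t < i\<close> by simp
    then show False using row_entry[OF c(1,2)] entry[OF top] c(3) t \<open>t < i\<close> by linarith
  qed
qed

lemma contained_max_shape_if_Tab:
  assumes lam: "is_partition k lam" and mu: "is_partition k mu" and "Tab k mu lam \<noteq> {}"
  shows "contained mu (max_shape lam)"
  unfolding contained_def
proof
  fix a
  obtain T where T: "T \<in> Tab k mu lam" using assms(3) by blast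
  show "part mu a \<le> part (max_shape lam) a"
  proof (cases "1 \<le> a \<and> a \<le> length lam")
    case True
    then have "part mu a - part lam a \<le> sylv (rows_above lam a)"
      using le_sylv Tab_staircase_above_row[OF lam mu T] by blast
    then show ?thesis using True by (simp add: part_max_shape)
  next
    case False
    then show ?thesis using lam mu by (auto simp: part_def is_partition_def)
  qed
qed

lemma contained_size_le_imp_eq:
  assumes "contained xs ys" "length xs = length ys" "size_part ys \<le> size_part xs"
  shows "xs = ys"
proof (rule nth_equalityI)
  show "length xs = length ys" by fact
  have le: "xs ! j \<le> ys ! j" if "j \<in> {..<length xs}" for j
    using assms(1,2) that unfolding contained_def by (auto simp: part_def dest: spec[of _ "Suc j"])
  have "(\<Sum>j<length xs. ys ! j) \<le> (\<Sum>j<length xs. xs ! j)"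
    using assms(2,3) by (simp add: size_part_def sum_list_sum_nth atLeast0LessThan)
  moreover have "(\<Sum>j<length xs. xs ! j) \<le> (\<Sum>j<length xs. ys ! j)"
    using le by (rule sum_mono)
  ultimately have "(\<Sum>j<length xs. xs ! j) = (\<Sum>j<length xs. ys ! j)" by simp
  with le show "xs ! j = ys ! j" if "j < length xs" for j
    using sum_mono_inv[of "(!) xs"] that by blast
qed

lemma maximal_for_eq_max_shape:
  assumes lam: "is_partition k lam" and "maximal_for k lam mu"
  shows "mu = max_shape lam"
proof (rule contained_size_le_imp_eq)
  have mu: "is_partition k mu" and "Tab k mu lam \<noteq> {}"
    using assms(2) unfolding maximal_for_def by auto
  then show "contained mu (max_shape lam)" by (rule contained_max_shape_if_Tab[OF lam])
  show "length mu = length (max_shape lam)"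
    using mu is_partition_max_shape[OF lam] by (simp add: is_partition_def)
  show "size_part (max_shape lam) \<le> size_part mu"
    using assms(2) is_partition_max_shape[OF lam] contained_max_shape Tab_max_shape_nonempty[OF lam]
    unfolding maximal_for_def by (meson not_le)
qed

lemma le_block_values_0:
  assumes "x \<in> set lam"
  shows "x \<le> block_values lam ! 0"
proof -
  define xs where "xs = sorted_list_of_set (set lam)"
  have "x \<in> set xs" using assms by (simp add: xs_def)
  then obtain j where j: "j < length xs" "xs ! j = x" by (metis in_set_conv_nth)
  have "xs ! j \<le> xs ! (length xs - 1)" using j by (intro sorted_nth_mono) (auto simp: xs_def)
  moreover have "block_values lam ! 0 = xs ! (length xs - 1)"
    using j unfolding block_values_def xs_def[symmetric] by (subst rev_nth) auto
  ultimately show ?thesis using j by simp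
qed

lemma part_lam_trunc:
  assumes lam: "is_partition k lam" and h: "h < num_blocks lam" and i: "i \<in> block lam (h + 1)"
  shows "part (lam_trunc lam h) = part (rows_above lam i)"
proof -
  have i1: "1 \<le> i" "i \<le> length lam" and part_i: "part lam i = block_values lam ! h"
    using i unfolding block_def by auto
  show ?thesis
  proof (cases "h = 0")
    case True
    have "lam ! 0 \<in> set lam" using i1 by (intro nth_mem) auto
    then have "part lam 1 \<le> part lam i"
      using le_block_values_0 part_i True i1 by (auto simp: part_def)
    then have "part lam t - part lam i = 0" if "1 \<le> t" for t
      using part_antimono[OF lam order.refl that] by simp
    then show ?thesis
      using True by (auto simp: lam_trunc_def part_rows_above[OF lam i1(1)] part_def[of "[]"])
  next
    case False
    define m where "m = Min (block lam (h + 1))"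
    have "finite (block lam (h + 1))" unfolding block_def by simp
    then have "m \<in> block lam (h + 1)" using i unfolding m_def by (auto intro: Min_in)
    then have m1: "1 \<le> m" and "part lam m = part lam i" using part_i unfolding block_def by auto
    moreover have "lam_trunc lam h = rows_above lam m"
      using False h unfolding lam_trunc_def rows_above_def m_def by (simp add: Let_def)
    ultimately show ?thesis by (auto simp: part_rows_above[OF lam m1] part_rows_above[OF lam i1(1)])
  qed
qed

theorem proposition3p10:
  fixes k h i :: nat and lam mu :: "nat list"
  assumes "is_partition k lam"
    and "maximal_for k lam mu"
    and "h < num_blocks lam"
    and "i \<in> block lam (h + 1)"
  shows "part mu i = part lam i + sylv (lam_trunc lam h)"
proof -
  have "1 \<le> i" "i \<le> length lam" using assms(4) unfolding block_def by auto
  then have "part mu i = part lam i + sylv (rows_above lam i)"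
    using maximal_for_eq_max_shape[OF assms(1,2)] by (simp add: part_max_shape)
  also have "sylv (rows_above lam i) = sylv (lam_trunc lam h)"
    unfolding sylv_def contained_def part_lam_trunc[OF assms(1,3,4)] ..
  finally show ?thesis .
qed

end
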